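(* Let $P\subseteq M_{\mathbb R}$ be an $n$-dimensional reflexive polytope and let $\Lambda:=\Lambda_{n-2}$ be the sublattice of $M$ generated by all lattice points lying in faces of $P$ of dimension $n-2$. Let $x\in\mathcal R\setminus\Lambda$ and let $y\in\partial P\cap\Lambda$ with $y\notin\mathcal F_x$. Then $\langle\eta_x,y\rangle\ge 1$, and the point $p(x,y):=\langle\eta_x,y\rangle\,x+y$ lies in $\mathcal R\setminus\Lambda$ and is a root orthogonal to $x$, i.e. $\langle\eta_x,p(x,y)\rangle=0=\langle\eta_{p(x,y)},x\rangle$.
   Context: $M\cong\mathbb Z^n$ is a lattice, $N=\mathrm{Hom}_{\mathbb Z}(M,\mathbb Z)$ its dual with pairing $\langle\cdot,\cdot\rangle$. A reflexive polytope is an $n$-dimensional lattice polytope $P\subseteq M_{\mathbb R}$ containing the origin in its interior such that the dual polytope $P^*=\{u\in N_{\mathbb R}:\langle u,m\rangle\ge-1\ \forall m\in P\}$ has vertices in $N$; equivalently every facet $F$ of $P$ equals $\{m\in P:\langle\eta_F,m\rangle=-1\}$ for a unique $\eta_F\in N$ with $\langle \eta_F,\cdot\rangle\ge -1$ on $P$. $\partial P$ is the boundary of $P$. $\mathcal R$ (the set of Demazure roots of $P$) is the set of lattice points of $M$ lying in the relative interior of some facet of $P$. For $x\in\mathcal R$, $\mathcal F_x$ denotes the unique facet of $P$ containing $x$, and $\eta_x:=\eta_{\mathcal F_x}\in N$ is its inner normal, so $\langle\eta_x,\mathcal F_x\rangle=-1$. Two roots $x,y\in\mathcal R$ are called orthogonal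 if $\langle\eta_x,y\rangle=0=\langle\eta_y,x\rangle$. *)

theory Defs
  imports "HOL-Analysis.Analysis"
begin

text \<open>We identify M with the integer points of real^'n, and N with the integer
points of real^'n as well, the pairing being the standard inner product.\<close>

definition lattice_pt :: "real^'n \<Rightarrow> bool" where
  "lattice_pt v \<longleftrightarrow> (\<forall>i. v $ i \<in> \<int>)"

definition lattice_polytope :: "(real^'n) set \<Rightarrow> bool" where
  "lattice_polytope P \<longleftrightarrow> (\<exists>S. finite S \<and> (\<forall>v\<in>S. lattice_pt v) \<and> P = convex hull S)"

definition reflexive :: "(real^'n) set \<Rightarrow> bool" where
  "reflexive P \<longleftrightarrow> lattice_polytope P \<and> aff_dim P = int CARD('n) \<and> 0 \<in> interior P \<and>
     (\<forall>F. F facet_of P \<longrightarrow> (\<exists>!\<eta>. lattice_pt \<eta> \<and> (\<forall>m\<in>P. \<eta> \<bullet> m \<ge> -1) \<and>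
                                   F = {m\<in>P. \<eta> \<bullet> m = -1}))"

definition inner_normal :: "(real^'n) set \<Rightarrow> (real^'n) set \<Rightarrow> real^'n" where
  "inner_normal P F = (THE \<eta>. lattice_pt \<eta> \<and> (\<forall>m\<in>P. \<eta> \<bullet> m \<ge> -1) \<and> F = {m\<in>P. \<eta> \<bullet> m = -1})"

definition roots :: "(real^'n) set \<Rightarrow> (real^'n) set" where
  "roots P = {x. lattice_pt x \<and> (\<exists>F. F facet_of P \<and> x \<in> rel_interior F)}"

definition facet_at :: "(real^'n) set \<Rightarrow> real^'n \<Rightarrow> (real^'n) set" where
  "facet_at P x = (THE F. F facet_of P \<and> x \<in> F)"

definition eta :: "(real^'n) set \<Rightarrow> real^'n \<Rightarrow> real^'n" where
  "eta P x = inner_normal P (facet_at P x)"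

definition int_span :: "(real^'n) set \<Rightarrow> (real^'n) set" where
  "int_span G = {v. \<exists>S c. finite S \<and> S \<subseteq> G \<and> (\<forall>s\<in>S. c s \<in> \<int>) \<and> v = (\<Sum>s\<in>S. c s *\<^sub>R s)}"

definition Lambda :: "(real^'n) set \<Rightarrow> (real^'n) set" where
  "Lambda P = int_span {v. lattice_pt v \<and> (\<exists>F. F face_of P \<and> aff_dim F = int CARD('n) - 2 \<and> v \<in> F)}"

end

theory Submission
  imports Defs
begin

(*
  For a facet G with normal n_G and a lattice point m of P, the value n_G . m is an integer
  that is at least -1, with equality exactly when m lies on G; a lattice point lying on two
  distinct facets lies in a face of dimension n - 2, hence in Lambda.

  Put k = eta_x . y, which is a nonnegative integer since y is not on F_x. If k = 0, let H be
  a facet through y on which h = n_H . x is minimal; then x + (h + 1) y lies on F_x and on H,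
  so it is in Lambda, and so is x. Hence k >= 1 and p = k x + y satisfies eta_x . p = 0 and
  n_G . p >= -1 for all facets G. As P is bounded and p <> 0, not all n_G . p are nonnegative,
  which produces a facet H with n_H . x = 0 and n_H . y = -1. Then p lies on H and p + x lies
  on F_x and on H, so p + x is in Lambda while p is not. Therefore no facet other than H
  contains p: p is a root with facet H, and eta_p . x = n_H . x = 0.
*)

lemma lattice_pt_add: "lattice_pt a \<Longrightarrow> lattice_pt b \<Longrightarrow> lattice_pt (a + b)"
  unfolding lattice_pt_def by auto

lemma lattice_pt_scaleR: "c \<in> \<int> \<Longrightarrow> lattice_pt a \<Longrightarrow> lattice_pt (c *\<^sub>R a)"
  unfolding lattice_pt_def by auto

lemma lattice_pt_inner_Ints: "lattice_pt a \<Longrightarrow> lattice_pt b \<Longrightarrow> a \<bullet> b \<in> \<int>"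
  unfolding lattice_pt_def inner_vec_def by (intro Ints_sum Ints_mult) auto

lemma Ints_greater_minus_one_imp_nonneg: "(r::real) \<in> \<int> \<Longrightarrow> -1 < r \<Longrightarrow> 0 \<le> r"
  by (elim Ints_cases) simp

lemma Ints_pos_imp_ge_one: "(r::real) \<in> \<int> \<Longrightarrow> 0 < r \<Longrightarrow> 1 \<le> r"
  by (elim Ints_cases) simp

lemma int_span_superset: "v \<in> G \<Longrightarrow> v \<in> int_span G"
  unfolding int_span_def by (intro CollectI exI[of _ "{v}"] exI[of _ "\<lambda>_. 1"]) auto

lemma int_span_scaleR:
  assumes "a \<in> int_span G" "r \<in> \<int>"
  shows "r *\<^sub>R a \<in> int_span G"
proof -
  obtain S c where "finite S" "S \<subseteq> G" "\<forall>s\<in>S. c s \<in> \<int>" "a = (\<Sum>s\<in>S. c s *\<^sub>R s)"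
    using assms(1) unfolding int_span_def by blast
  then show ?thesis
    using assms(2) unfolding int_span_def
    by (intro CollectI exI[of _ S] exI[of _ "\<lambda>s. r * c s"]) (auto simp: scaleR_sum_right)
qed

lemma int_span_add:
  assumes "a \<in> int_span G" "b \<in> int_span G"
  shows "a + b \<in> int_span G"
proof -
  obtain S c where S: "finite S" "S \<subseteq> G" "\<forall>s\<in>S. c s \<in> \<int>" "a = (\<Sum>s\<in>S. c s *\<^sub>R s)"
    using assms(1) unfolding int_span_def by blast
  obtain T d where T: "finite T" "T \<subseteq> G" "\<forall>s\<in>T. d s \<in> \<int>" "b = (\<Sum>s\<in>T. d s *\<^sub>R s)"
    using assms(2) unfolding int_span_def by blast
  define e where "e s = (if s \<in> S then c s else 0) + (if s \<in> T then d s else 0)" for s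
  have "(\<Sum>s\<in>S \<union> T. (if s \<in> S then c s else 0) *\<^sub>R s) = a"
    using S T unfolding S(4) by (intro sum.mono_neutral_cong_right) auto
  moreover have "(\<Sum>s\<in>S \<union> T. (if s \<in> T then d s else 0) *\<^sub>R s) = b"
    using S T unfolding T(4) by (intro sum.mono_neutral_cong_right) auto
  ultimately have "a + b = (\<Sum>s\<in>S \<union> T. e s *\<^sub>R s)"
    unfolding e_def by (simp add: sum.distrib scaleR_add_left)
  moreover have "\<forall>s\<in>S \<union> T. e s \<in> \<int>"
    using S T unfolding e_def by auto
  ultimately show ?thesis
    using S T unfolding int_span_def by (intro CollectI exI[of _ "S \<union> T"] exI[of _ e]) auto
qed

lemma int_span_diff: "a \<in> int_span G \<Longrightarrow> b \<in> int_span G \<Longrightarrow> a - b \<in> int_span G"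
  using int_span_add[of a G "(-1) *\<^sub>R b"] int_span_scaleR[of b G "-1"] by simp

lemma lattice_pt_int_span:
  "(\<And>v. v \<in> G \<Longrightarrow> lattice_pt v) \<Longrightarrow> v \<in> int_span G \<Longrightarrow> lattice_pt v"
  unfolding int_span_def lattice_pt_def by (fastforce intro!: Ints_sum Ints_mult simp: sum_component)

lemma Lambda_diff: "a \<in> Lambda P \<Longrightarrow> b \<in> Lambda P \<Longrightarrow> a - b \<in> Lambda P"
  unfolding Lambda_def by (rule int_span_diff)

lemma Lambda_scaleR: "a \<in> Lambda P \<Longrightarrow> r \<in> \<int> \<Longrightarrow> r *\<^sub>R a \<in> Lambda P"
  unfolding Lambda_def by (rule int_span_scaleR)

lemma lattice_pt_Lambda: "v \<in> Lambda P \<Longrightarrow> lattice_pt v"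
  unfolding Lambda_def by (erule lattice_pt_int_span[rotated]) blast

lemma facet_of_subset_imp_eq:
  assumes "convex P" "F facet_of P" "G facet_of P" "F \<subseteq> G"
  shows "F = G"
proof (rule ccontr)
  assume "F \<noteq> G"
  moreover have "F face_of G"
    using assms by (meson face_of_subset facet_of_imp_face_of facet_of_imp_subset)
  moreover have "convex G"
    using assms(3) face_of_imp_convex facet_of_imp_face_of by blast
  ultimately have "aff_dim F < aff_dim G"
    using face_of_aff_dim_lt by blast
  then show False
    using assms(2,3) unfolding facet_of_def by simp
qed

lemma facet_of_rel_interior_unique:
  assumes "convex P" "F facet_of P" "x \<in> rel_interior F" "G facet_of P" "x \<in> G"
  shows "G = F"
proof -
  have "F \<subseteq> G"
    using assms
    by (intro subset_of_face_of[of G P F]) (auto dest: facet_of_imp_face_of facet_of_imp_subset)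
  then show ?thesis
    using facet_of_subset_imp_eq[OF assms(1,2,4)] by simp
qed

lemma polyhedron_mem_rel_interior_facet:
  fixes P :: "'a::euclidean_space set"
  assumes "polyhedron P" "H facet_of P" "p \<in> H"
    and only_H: "\<And>G. G facet_of P \<Longrightarrow> p \<in> G \<Longrightarrow> G = H"
  shows "p \<in> rel_interior H"
proof (rule ccontr)
  assume "p \<notin> rel_interior H"
  have HP: "H face_of P"
    using assms(2) by (rule facet_of_imp_face_of)
  then have "polyhedron H"
    using assms(1) face_of_polyhedron_polyhedron by blast
  then obtain G where G: "G facet_of H" "p \<in> G"
    using rel_interior_of_polyhedron \<open>p \<notin> rel_interior H\<close> assms(3) by blast
  have GP: "G face_of P"
    using G(1) HP face_of_trans facet_of_imp_face_of by blast
  have dims: "aff_dim G = aff_dim H - 1" "aff_dim H = aff_dim P - 1"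
    using G(1) assms(2) unfolding facet_of_def by simp_all
  then have "G \<noteq> P"
    by auto
  then have "G = \<Inter>{F. F facet_of P \<and> G \<subseteq> F}"
    using face_of_polyhedron[OF assms(1) GP] G(2) by blast
  also have "\<dots> \<supseteq> H"
    using only_H G(2) by blast
  finally have "H \<subseteq> G" .
  then show False
    using G(1) dims(1) facet_of_imp_subset by fastforce
qed

lemma polyhedron_facets_Int_subset_ridge:
  fixes P :: "'a::euclidean_space set"
  assumes "polyhedron P" "F facet_of P" "H facet_of P" "F \<noteq> H" "F \<inter> H \<noteq> {}"
  obtains R where "R face_of P" "aff_dim R = aff_dim P - 2" "F \<inter> H \<subseteq> R"
proof -
  have FP: "F face_of P"
    using assms(2) by (rule facet_of_imp_face_of)
  have "(F \<inter> H) face_of F"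
    using face_of_Int[OF FP facet_of_imp_face_of[OF assms(3)]] face_of_subset[of _ P F]
      facet_of_imp_subset[OF assms(2)] by blast
  moreover have "F \<inter> H \<noteq> F"
    using facet_of_subset_imp_eq[OF polyhedron_imp_convex[OF assms(1)] assms(2,3)] assms(4) by blast
  moreover have "polyhedron F"
    using assms(1) FP face_of_polyhedron_polyhedron by blast
  ultimately obtain R where R: "R facet_of F" "F \<inter> H \<subseteq> R"
    using face_of_polyhedron_subset_facet assms(5) by blast
  moreover have "R face_of P"
    using R(1) FP face_of_trans facet_of_imp_face_of by blast
  moreover have "aff_dim R = aff_dim P - 2"
    using R(1) assms(2) unfolding facet_of_def by simp
  ultimately show ?thesis
    using that by blast
qed

lemma bounded_ray_imp_zero:
  fixes p :: "'a::real_normed_vector"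
  assumes "bounded S" "\<And>s. s \<ge> 0 \<Longrightarrow> s *\<^sub>R p \<in> S"
  shows "p = 0"
proof (rule ccontr)
  assume "p \<noteq> 0"
  obtain B where B: "\<And>v. v \<in> S \<Longrightarrow> norm v \<le> B"
    using assms(1) bounded_iff by blast
  have "0 \<le> B"
    using B[OF assms(2)[of 0]] by simp
  then have "norm (((B + 1) / norm p) *\<^sub>R p) = B + 1"
    using \<open>p \<noteq> 0\<close> by simp
  then show False
    using B[OF assms(2)[of "(B + 1) / norm p"]] \<open>0 \<le> B\<close> by simp
qed

locale reflexive_polytope =
  fixes P :: "(real^'n) set"
  assumes reflexive: "reflexive P"
begin

lemma polytope: "polytope P"
  using reflexive unfolding reflexive_def lattice_polytope_def polytope_def by blast

lemma polyhedron: "polyhedron P"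
  using polytope by (rule polytope_imp_polyhedron)

lemma convex: "convex P"
  using polytope by (rule polytope_imp_convex)

lemma closed: "closed P"
  using polytope by (rule polytope_imp_closed)

lemma bounded: "bounded P"
  using polytope by (rule polytope_imp_bounded)

lemma zero_in_interior: "0 \<in> interior P"
  using reflexive unfolding reflexive_def by blast

lemma inner_normal_facet:
  assumes "G facet_of P"
  shows "lattice_pt (inner_normal P G)"
    and "\<And>m. m \<in> P \<Longrightarrow> -1 \<le> inner_normal P G \<bullet> m"
    and "G = {m\<in>P. inner_normal P G \<bullet> m = -1}"
proof -
  have "\<exists>!\<eta>. lattice_pt \<eta> \<and> (\<forall>m\<in>P. -1 \<le> \<eta> \<bullet> m) \<and> G = {m\<in>P. \<eta> \<bullet> m = -1}"
    using reflexive assms unfolding reflexive_def by blast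
  from theI'[OF this] show "lattice_pt (inner_normal P G)"
    and "\<And>m. m \<in> P \<Longrightarrow> -1 \<le> inner_normal P G \<bullet> m"
    and "G = {m\<in>P. inner_normal P G \<bullet> m = -1}"
    unfolding inner_normal_def by blast+
qed

lemma mem_facet_iff: "G facet_of P \<Longrightarrow> m \<in> P \<Longrightarrow> m \<in> G \<longleftrightarrow> inner_normal P G \<bullet> m = -1"
  using inner_normal_facet(3) by blast

lemma frontier_imp_mem_facet:
  assumes "y \<in> frontier P"
  obtains H where "H facet_of P" "y \<in> H"
proof -
  have "frontier P = rel_frontier P"
    using zero_in_interior unfolding frontier_def rel_frontier_def
    by (metis empty_iff rel_interior_nonempty_interior)
  then show ?thesis
    using assms that rel_frontier_of_polyhedron[OF polyhedron] by auto
qed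

lemma mem_iff_inner_normal_ge:
  "m \<in> P \<longleftrightarrow> (\<forall>G. G facet_of P \<longrightarrow> -1 \<le> inner_normal P G \<bullet> m)"
proof (intro iffI allI impI)
  show "-1 \<le> inner_normal P G \<bullet> m" if "m \<in> P" "G facet_of P" for G
    using inner_normal_facet(2) that by blast
next
  assume ge: "\<forall>G. G facet_of P \<longrightarrow> -1 \<le> inner_normal P G \<bullet> m"
  show "m \<in> P"
  proof (rule ccontr)
    assume "m \<notin> P"
    have "0 \<in> P"
      using zero_in_interior interior_subset by blast
    then obtain q where q: "q \<in> closed_segment 0 m" "q \<in> frontier P"
      using connected_Int_frontier[of "closed_segment 0 m" P] \<open>m \<notin> P\<close> by auto
    then obtain u where u: "0 \<le> u" "u \<le> 1" "q = u *\<^sub>R m"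
      by (auto simp: in_segment)
    have "q \<in> P"
      using q(2) closed frontier_subset_closed by blast
    then have "u < 1"
      using u \<open>m \<notin> P\<close> by (cases "u = 1") auto
    obtain H where H: "H facet_of P" "q \<in> H"
      using q(2) frontier_imp_mem_facet by blast
    then have "u * (inner_normal P H \<bullet> m) = -1"
      using mem_facet_iff facet_of_imp_subset u(3) by fastforce
    moreover have "u * (inner_normal P H \<bullet> m) \<ge> - u"
      using ge H(1) u(1) mult_left_mono[of "-1" _ u] by fastforce
    ultimately show False
      using \<open>u < 1\<close> by linarith
  qed
qed

lemma lattice_pt_notin_facet_imp_nonneg:
  assumes "G facet_of P" "m \<in> P" "m \<notin> G" "lattice_pt m"
  shows "0 \<le> inner_normal P G \<bullet> m"
proof (rule Ints_greater_minus_one_imp_nonneg)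
  show "inner_normal P G \<bullet> m \<in> \<int>"
    using assms(1,4) inner_normal_facet(1) lattice_pt_inner_Ints by blast
  show "-1 < inner_normal P G \<bullet> m"
    using assms(1-3) inner_normal_facet(2) mem_facet_iff by force
qed

lemma lattice_pt_in_two_facets_imp_Lambda:
  assumes "F facet_of P" "H facet_of P" "F \<noteq> H" "z \<in> F" "z \<in> H" "lattice_pt z"
  shows "z \<in> Lambda P"
proof -
  obtain R where "R face_of P" "aff_dim R = aff_dim P - 2" "F \<inter> H \<subseteq> R"
    using polyhedron_facets_Int_subset_ridge[OF polyhedron assms(1-3)] assms(4,5) by blast
  moreover have "aff_dim P = int CARD('n)"
    using reflexive unfolding reflexive_def by blast
  ultimately show ?thesis
    unfolding Lambda_def using assms(4-6) by (intro int_span_superset) auto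
qed

lemma facet_at_eqI:
  assumes "H facet_of P" "p \<in> H" "\<And>G. G facet_of P \<Longrightarrow> p \<in> G \<Longrightarrow> G = H"
  shows "facet_at P p = H"
  unfolding facet_at_def by (rule the_equality) (use assms in blast)+

lemma root_facet_at:
  assumes "x \<in> roots P"
  shows "facet_at P x facet_of P" "x \<in> rel_interior (facet_at P x)"
proof -
  obtain F where F: "F facet_of P" "x \<in> rel_interior F"
    using assms unfolding roots_def by blast
  moreover have "x \<in> F"
    using F(2) rel_interior_subset by blast
  ultimately have "facet_at P x = F"
    using facet_at_eqI facet_of_rel_interior_unique[OF convex F] by blast
  then show "facet_at P x facet_of P" "x \<in> rel_interior (facet_at P x)"
    using F by simp_all
qed

lemma root_in_facet_at: "x \<in> roots P \<Longrightarrow> x \<in> facet_at P x"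
  using root_facet_at(2) rel_interior_subset by blast

lemma root_notin_other_facet:
  "x \<in> roots P \<Longrightarrow> G facet_of P \<Longrightarrow> G \<noteq> facet_at P x \<Longrightarrow> x \<notin> G"
  using facet_of_rel_interior_unique[OF convex root_facet_at] by blast

lemma lattice_pt_in_unique_facet:
  assumes "lattice_pt p" "H facet_of P" "p \<in> H" "\<And>G. G facet_of P \<Longrightarrow> p \<in> G \<Longrightarrow> G = H"
  shows "p \<in> roots P" "facet_at P p = H"
proof -
  have "p \<in> rel_interior H"
    using polyhedron_mem_rel_interior_facet[OF polyhedron assms(2-4)] .
  then show "p \<in> roots P"
    unfolding roots_def using assms(1,2) by blast
  show "facet_at P p = H"
    using facet_at_eqI assms(2-4) .
qed

end

locale root_and_Lambda_point = reflexive_polytope +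
  fixes x y :: "real^'n"
  assumes x_root: "x \<in> roots P" and x_notin_Lambda: "x \<notin> Lambda P"
    and y_frontier: "y \<in> frontier P" and y_Lambda: "y \<in> Lambda P"
    and y_notin_facet: "y \<notin> facet_at P x"
begin

abbreviation F\<^sub>x where "F\<^sub>x \<equiv> facet_at P x"

abbreviation k where "k \<equiv> eta P x \<bullet> y"

abbreviation p where "p \<equiv> k *\<^sub>R x + y"

lemma F\<^sub>x_facet: "F\<^sub>x facet_of P"
  using root_facet_at(1)[OF x_root] .

lemma x_in_F\<^sub>x: "x \<in> F\<^sub>x"
  using root_in_facet_at[OF x_root] .

lemma x_in_P: "x \<in> P"
  using x_in_F\<^sub>x F\<^sub>x_facet facet_of_imp_subset by blast

lemma lattice_pt_x: "lattice_pt x"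
  using x_root unfolding roots_def by blast

lemma eta_x_x: "eta P x \<bullet> x = -1"
  using mem_facet_iff[OF F\<^sub>x_facet x_in_P] x_in_F\<^sub>x unfolding eta_def by blast

lemma inner_normal_x_Ints: "G facet_of P \<Longrightarrow> inner_normal P G \<bullet> x \<in> \<int>"
  using inner_normal_facet(1) lattice_pt_x lattice_pt_inner_Ints by blast

lemma inner_normal_x_nonneg: "G facet_of P \<Longrightarrow> G \<noteq> F\<^sub>x \<Longrightarrow> 0 \<le> inner_normal P G \<bullet> x"
  using lattice_pt_notin_facet_imp_nonneg x_in_P lattice_pt_x root_notin_other_facet[OF x_root]
  by blast

lemma lattice_pt_y: "lattice_pt y"
  using y_Lambda by (rule lattice_pt_Lambda)

lemma y_in_P: "y \<in> P"
  using y_frontier closed frontier_subset_closed by blast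

lemma inner_normal_y_Ints: "G facet_of P \<Longrightarrow> inner_normal P G \<bullet> y \<in> \<int>"
  using inner_normal_facet(1) lattice_pt_y lattice_pt_inner_Ints by blast

lemma inner_normal_y_nonneg: "G facet_of P \<Longrightarrow> y \<notin> G \<Longrightarrow> 0 \<le> inner_normal P G \<bullet> y"
  using lattice_pt_notin_facet_imp_nonneg y_in_P lattice_pt_y by blast

lemma k_Ints: "k \<in> \<int>"
  using inner_normal_y_Ints[OF F\<^sub>x_facet] unfolding eta_def .

lemma k_nonneg: "0 \<le> k"
  using inner_normal_y_nonneg[OF F\<^sub>x_facet y_notin_facet] unfolding eta_def .

lemma lattice_pt_on_root_facet_and_facet_imp_Lambda:
  assumes "H facet_of P" "H \<noteq> F\<^sub>x" "z \<in> P" "lattice_pt z"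
    and "eta P x \<bullet> z = -1" "inner_normal P H \<bullet> z = -1"
  shows "z \<in> Lambda P"
  using assms lattice_pt_in_two_facets_imp_Lambda[OF F\<^sub>x_facet assms(1)]
    mem_facet_iff[OF _ assms(3)] F\<^sub>x_facet unfolding eta_def by metis

lemma shifted_root_in_P:
  assumes "k = 0" "H facet_of P" "y \<in> H"
    and H_min:
      "\<And>G. G facet_of P \<Longrightarrow> y \<in> G \<Longrightarrow> inner_normal P H \<bullet> x \<le> inner_normal P G \<bullet> x"
  shows "x + (inner_normal P H \<bullet> x + 1) *\<^sub>R y \<in> P"
  unfolding mem_iff_inner_normal_ge
proof (intro allI impI)
  fix G assume G: "G facet_of P"
  define t where "t = inner_normal P H \<bullet> x + 1"
  have inner_G:
    "inner_normal P G \<bullet> (x + t *\<^sub>R y) = inner_normal P G \<bullet> x + t * (inner_normal P G \<bullet> y)"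
    by (simp add: inner_add_right)
  consider "G = F\<^sub>x" | "G \<noteq> F\<^sub>x" "y \<in> G" | "G \<noteq> F\<^sub>x" "y \<notin> G"
    by blast
  then have "-1 \<le> inner_normal P G \<bullet> (x + t *\<^sub>R y)"
  proof cases
    case 1
    then show ?thesis
      using eta_x_x assms(1) inner_G unfolding eta_def by simp
  next
    case 2
    then show ?thesis
      using H_min[OF G] mem_facet_iff[OF G y_in_P] inner_G t_def by simp
  next
    case 3
    have "H \<noteq> F\<^sub>x"
      using assms(3) y_notin_facet by blast
    then have "0 \<le> t"
      unfolding t_def using inner_normal_x_nonneg[OF assms(2)] by simp
    then have "0 \<le> inner_normal P G \<bullet> x" "0 \<le> t * (inner_normal P G \<bullet> y)"
      using G 3 inner_normal_x_nonneg inner_normal_y_nonneg by simp_all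
    then show ?thesis
      using inner_G by simp
  qed
  then show "-1 \<le> inner_normal P G \<bullet> (x + (inner_normal P H \<bullet> x + 1) *\<^sub>R y)"
    unfolding t_def .
qed

lemma k_ge_1: "1 \<le> k"
proof (rule ccontr)
  assume "\<not> 1 \<le> k"
  then have k0: "k = 0"
    using k_nonneg k_Ints Ints_pos_imp_ge_one by force
  define A where "A = {G. G facet_of P \<and> y \<in> G}"
  have "finite A"
    using finite_polyhedron_facets[OF polyhedron] unfolding A_def by simp
  moreover have "A \<noteq> {}"
    using frontier_imp_mem_facet[OF y_frontier] unfolding A_def by blast
  ultimately obtain H where "H \<in> A"
    and H_min: "\<And>G. G \<in> A \<Longrightarrow> inner_normal P H \<bullet> x \<le> inner_normal P G \<bullet> x"
    using arg_min_if_finite[of A "\<lambda>G. inner_normal P G \<bullet> x"] by (metis not_less)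
  then have H: "H facet_of P" "y \<in> H" "H \<noteq> F\<^sub>x"
    unfolding A_def using y_notin_facet by auto
  define t where "t = inner_normal P H \<bullet> x + 1"
  define z where "z = x + t *\<^sub>R y"
  have t: "t \<in> \<int>"
    unfolding t_def using inner_normal_x_Ints[OF H(1)] by simp
  have "z \<in> P"
    unfolding z_def t_def using shifted_root_in_P[OF k0 H(1,2)] H_min unfolding A_def by blast
  moreover have "lattice_pt z"
    unfolding z_def using lattice_pt_add lattice_pt_scaleR lattice_pt_x lattice_pt_y t by blast
  moreover have "eta P x \<bullet> z = -1" "inner_normal P H \<bullet> z = -1"
    using eta_x_x k0 mem_facet_iff[OF H(1) y_in_P] H(2)
    unfolding z_def t_def by (simp_all add: inner_add_right)
  ultimately have "z \<in> Lambda P"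
    using lattice_pt_on_root_facet_and_facet_imp_Lambda H(1,3) by blast
  then have "z - t *\<^sub>R y \<in> Lambda P"
    using Lambda_diff Lambda_scaleR y_Lambda t by blast
  then show False
    using x_notin_Lambda unfolding z_def by simp
qed

lemma inner_p: "v \<bullet> p = k * (v \<bullet> x) + v \<bullet> y"
  by (simp add: inner_add_right)

lemma eta_x_p: "eta P x \<bullet> p = 0"
  using eta_x_x inner_p by simp

lemma p_nonzero: "p \<noteq> 0"
proof
  assume "p = 0"
  obtain H where H: "H facet_of P" "y \<in> H"
    using frontier_imp_mem_facet[OF y_frontier] by blast
  then have "H \<noteq> F\<^sub>x"
    using y_notin_facet by blast
  have "inner_normal P H \<bullet> p = 0"
    by (simp only: \<open>p = 0\<close> inner_zero_right)
  then have "k * (inner_normal P H \<bullet> x) = 1"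
    using inner_p mem_facet_iff[OF H(1) y_in_P] H(2) by simp
  moreover have "1 \<le> inner_normal P H \<bullet> x"
  proof (rule Ints_pos_imp_ge_one[OF inner_normal_x_Ints[OF H(1)]])
    show "0 < inner_normal P H \<bullet> x"
      using calculation inner_normal_x_nonneg[OF H(1) \<open>H \<noteq> F\<^sub>x\<close>]
      by (cases "inner_normal P H \<bullet> x = 0") auto
  qed
  then have "k * 1 \<le> k * (inner_normal P H \<bullet> x)"
    using k_nonneg by (rule mult_left_mono)
  ultimately have "k = 1"
    using k_ge_1 by simp
  then have "p = x + y"
    by simp
  then have "x = (-1) *\<^sub>R y"
    using \<open>p = 0\<close> by (simp add: add_eq_0_iff2)
  moreover have "(-1) *\<^sub>R y \<in> Lambda P"
    using Lambda_scaleR[OF y_Lambda, of "-1"] by simp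
  ultimately show False
    using x_notin_Lambda by simp
qed

lemma exists_facet_orthogonal:
  "\<exists>H. H facet_of P \<and> H \<noteq> F\<^sub>x \<and> inner_normal P H \<bullet> x = 0 \<and> inner_normal P H \<bullet> y = -1"
proof (rule ccontr)
  assume no_H: "\<not> ?thesis"
  have "0 \<le> inner_normal P G \<bullet> p" if G: "G facet_of P" for G
  proof (cases "G = F\<^sub>x")
    case True
    then show ?thesis
      using eta_x_p unfolding eta_def by simp
  next
    case False
    show ?thesis
    proof (cases "inner_normal P G \<bullet> x = 0")
      case True
      then have "y \<notin> G"
        using no_H G \<open>G \<noteq> F\<^sub>x\<close> mem_facet_iff[OF G y_in_P] by blast
      then show ?thesis
        using inner_p True inner_normal_y_nonneg[OF G] by simp
    next
      case False
      then have "1 \<le> inner_normal P G \<bullet> x"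
        using \<open>G \<noteq> F\<^sub>x\<close> G inner_normal_x_Ints inner_normal_x_nonneg Ints_pos_imp_ge_one
        by force
      then have "1 \<le> k * (inner_normal P G \<bullet> x)"
        using k_ge_1 mult_mono[of 1 k 1] by fastforce
      then show ?thesis
        using inner_p inner_normal_facet(2)[OF G y_in_P] by simp
    qed
  qed
  then have "s *\<^sub>R p \<in> P" if "0 \<le> s" for s
    unfolding mem_iff_inner_normal_ge using that
    by (simp add: order.trans[OF _ mult_nonneg_nonneg])
  then show False
    using bounded_ray_imp_zero[OF bounded] p_nonzero by blast
qed

lemma inner_normal_p_ge: "G facet_of P \<Longrightarrow> -1 \<le> inner_normal P G \<bullet> p"
proof (cases "G = F\<^sub>x")
  case True
  then show ?thesis
    using eta_x_p unfolding eta_def by simp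
next
  case False
  assume G: "G facet_of P"
  then have "0 \<le> k * (inner_normal P G \<bullet> x)"
    using k_nonneg inner_normal_x_nonneg[OF G False] by simp
  then show ?thesis
    using inner_p inner_normal_facet(2)[OF G y_in_P] by simp
qed

lemma p_in_P: "p \<in> P"
  unfolding mem_iff_inner_normal_ge using inner_normal_p_ge by blast

lemma p_plus_x_in_P: "p + x \<in> P"
  unfolding mem_iff_inner_normal_ge
proof (intro allI impI)
  fix G assume G: "G facet_of P"
  show "-1 \<le> inner_normal P G \<bullet> (p + x)"
  proof (cases "G = F\<^sub>x")
    case True
    then show ?thesis
      using eta_x_p eta_x_x unfolding eta_def by (simp add: inner_add_right)
  next
    case False
    then show ?thesis
      using inner_normal_p_ge[OF G] inner_normal_x_nonneg[OF G] by (simp add: inner_add_right)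
  qed
qed

lemma p_root_orthogonal: "p \<in> roots P" "p \<notin> Lambda P" "eta P p \<bullet> x = 0"
proof -
  obtain H where H: "H facet_of P" "H \<noteq> F\<^sub>x"
    "inner_normal P H \<bullet> x = 0" "inner_normal P H \<bullet> y = -1"
    using exists_facet_orthogonal by blast
  have lattice_p: "lattice_pt p"
    using lattice_pt_add lattice_pt_scaleR[OF k_Ints] lattice_pt_x lattice_pt_y by blast
  have p_H: "inner_normal P H \<bullet> p = -1"
    using inner_p H by simp
  have "eta P x \<bullet> (p + x) = -1" "inner_normal P H \<bullet> (p + x) = -1"
    using eta_x_p eta_x_x p_H H(3) by (simp_all add: inner_add_right)
  then have px_Lambda: "p + x \<in> Lambda P"
    using lattice_pt_on_root_facet_and_facet_imp_Lambda[OF H(1,2) p_plus_x_in_P]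
      lattice_pt_add[OF lattice_p lattice_pt_x] by blast
  show p_notin: "p \<notin> Lambda P"
    using Lambda_diff[OF px_Lambda] x_notin_Lambda by fastforce
  have only_H: "G = H" if "G facet_of P" "p \<in> G" for G
  proof (rule ccontr)
    assume "G \<noteq> H"
    then have "p \<in> Lambda P"
      using lattice_pt_in_two_facets_imp_Lambda[OF that(1) H(1)] that(2) lattice_p
        mem_facet_iff[OF H(1) p_in_P] p_H by blast
    then show False
      using p_notin by blast
  qed
  have "p \<in> H"
    using mem_facet_iff[OF H(1) p_in_P] p_H by blast
  from lattice_pt_in_unique_facet[OF lattice_p H(1) this only_H]
  show "p \<in> roots P" "eta P p \<bullet> x = 0"
    using H(3) unfolding eta_def by simp_all
qed

end

theorem mainTheorem2:
  fixes P :: "(real^'n) set" and x y :: "real^'n"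
  assumes "reflexive P"
    and "x \<in> roots P" and "x \<notin> Lambda P"
    and "y \<in> frontier P" and "y \<in> Lambda P" and "y \<notin> facet_at P x"
  shows "eta P x \<bullet> y \<ge> 1 \<and>
         (let p = (eta P x \<bullet> y) *\<^sub>R x + y in
            p \<in> roots P \<and> p \<notin> Lambda P \<and>
            eta P x \<bullet> p = 0 \<and> eta P p \<bullet> x = 0)"
proof -
  interpret root_and_Lambda_point P x y
    using assms by unfold_locales
  show ?thesis
    using k_ge_1 p_root_orthogonal eta_x_p by (simp add: Let_def)
qed

end
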